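(* If $X$ is a compact metric space and $T:X\to X$ is continuous, then for the system of coefficients $c_S^n=2^{-n}$, $$\lim_{\varepsilon\to0^+}\operatorname{Asc}_\varepsilon(X,T)=\lim_{\varepsilon\to0^+}\operatorname{Asc}'_\varepsilon(X,T)=h_{\mathrm{top}}(X,T).$$
   Context: $n^*=\{0,\dots,n-1\}$; for $S\subset n^*$, $r(S,\varepsilon)$ is the minimum cardinality of an $(S,\varepsilon)$-spanning set ($F$ such that every $x$ has $y\in F$ with $d(T^ix,T^iy)\le\varepsilon$ for all $i\in S$) and $s(S,\varepsilon)$ the maximum cardinality of an $(S,\varepsilon)$-separated set ($E$ such that distinct $x,y\in E$ have some $i\in S$ with $d(T^ix,T^iy)>\varepsilon$). $\operatorname{Asc}_\varepsilon(X,T)=\limsup_n\frac1n\sum_{S\subset n^*}c_S^n\log r(S,\varepsilon)$ and $\operatorname{Asc}'_\varepsilon(X,T)=\limsup_n\frac1n\sum_{S\subset n^*}c_S^n\log s(S,\varepsilon)$. $h_{\mathrm{top}}$ is topological entropy. *)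

theory Defs
  imports "HOL-Analysis.Analysis" "HOL-Library.Liminf_Limsup"
begin

definition spanning :: "('a::metric_space \<Rightarrow> 'a) \<Rightarrow> nat set \<Rightarrow> real \<Rightarrow> 'a set \<Rightarrow> bool" where
  "spanning T S \<epsilon> F \<longleftrightarrow> (\<forall>x. \<exists>y\<in>F. \<forall>i\<in>S. dist ((T ^^ i) x) ((T ^^ i) y) \<le> \<epsilon>)"

definition separated :: "('a::metric_space \<Rightarrow> 'a) \<Rightarrow> nat set \<Rightarrow> real \<Rightarrow> 'a set \<Rightarrow> bool" where
  "separated T S \<epsilon> E \<longleftrightarrow>
     (\<forall>x\<in>E. \<forall>y\<in>E. x \<noteq> y \<longrightarrow> (\<exists>i\<in>S. dist ((T ^^ i) x) ((T ^^ i) y) > \<epsilon>))"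

definition rspan :: "('a::metric_space \<Rightarrow> 'a) \<Rightarrow> nat set \<Rightarrow> real \<Rightarrow> nat" where
  "rspan T S \<epsilon> = Inf {card F | F. finite F \<and> spanning T S \<epsilon> F}"

definition ssep :: "('a::metric_space \<Rightarrow> 'a) \<Rightarrow> nat set \<Rightarrow> real \<Rightarrow> nat" where
  "ssep T S \<epsilon> = Sup {card E | E. finite E \<and> separated T S \<epsilon> E}"

text \<open>Asc_eps and Asc'_eps for a system of coefficients c n S (= c_S^n), S ranging over subsets
  of n* = {0..<n}.\<close>
definition Asc :: "(nat \<Rightarrow> nat set \<Rightarrow> real) \<Rightarrow> ('a::metric_space \<Rightarrow> 'a) \<Rightarrow> real \<Rightarrow> ereal" where
  "Asc c T \<epsilon> = limsup (\<lambda>n. ereal ((1 / real n) *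
      (\<Sum>S\<in>Pow {..<n}. c n S * ln (real (rspan T S \<epsilon>)))))"

definition Asc' :: "(nat \<Rightarrow> nat set \<Rightarrow> real) \<Rightarrow> ('a::metric_space \<Rightarrow> 'a) \<Rightarrow> real \<Rightarrow> ereal" where
  "Asc' c T \<epsilon> = limsup (\<lambda>n. ereal ((1 / real n) *
      (\<Sum>S\<in>Pow {..<n}. c n S * ln (real (ssep T S \<epsilon>)))))"

text \<open>Topological entropy (Bowen's definition via spanning sets):
  h_top = lim_{eps->0} limsup_n (1/n) log r(n*, eps); the inner quantity is
  nonincreasing in eps, so the limit equals the supremum over eps > 0.\<close>
definition htop :: "('a::metric_space \<Rightarrow> 'a) \<Rightarrow> ereal" where
  "htop T = (SUP \<epsilon>\<in>{0<..}. limsup (\<lambda>n. ereal (ln (real (rspan T {..<n} \<epsilon>)) / real n)))"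

end

theory Submission
  imports Defs
begin

text \<open>Since r(S,\<epsilon>) \<le> r(n*,\<epsilon>) for S \<subseteq> n* and the weights 2^-n sum to one over the subsets
  of n*, Asc_\<epsilon> is at most Bowen's entropy at scale \<epsilon>, hence at most h_top.
  Conversely, fix a finite \<delta>/2-net K and m.  By uniform continuity of T, ..., T^m an
  (S,\<epsilon>)-spanning set is (S_m,\<delta>)-spanning for the forward m-dilation S_m of S, and covering
  the remaining times by cells of K gives
  log r(n*,2\<delta>) \<le> log r(S,\<epsilon>) + |n* - S_m| log |K|.
  A time j \<ge> m lies outside S_m for exactly a 2^-(m+1) fraction of all S, so averaging over S
  yields Bowen's entropy at scale 2\<delta> \<le> Asc_\<epsilon> + 2^-m log |K|; letting m grow gives
  h_top = sup_\<epsilon> Asc_\<epsilon>, and Asc_\<epsilon> increases as \<epsilon> decreases.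
  Finally r(S,\<epsilon>) \<le> s(S,\<epsilon>) \<le> r(S,\<epsilon>/2) squeezes Asc'_\<epsilon> between Asc_\<epsilon> and Asc_(\<epsilon>/2).\<close>

lemma spanning_mono:
  "spanning T S' e F \<Longrightarrow> S \<subseteq> S' \<Longrightarrow> e \<le> e' \<Longrightarrow> spanning T S e' F"
  unfolding spanning_def by (meson order_trans subsetD)

lemma rspan_le_card: "finite F \<Longrightarrow> spanning T S e F \<Longrightarrow> rspan T S e \<le> card F"
  unfolding rspan_def by (rule cInf_lower) auto

text \<open>Each extra time in B costs a factor card K: split the spanning set for A into the cells
  of the net K visited at the times in B, and keep one point from each nonempty cell.\<close>
lemma spanning_extend:
  fixes T :: "'a::metric_space \<Rightarrow> 'a" and K :: "'a set"
  assumes K: "finite K" "\<forall>x. \<exists>k\<in>K. dist x k < d/2"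
    and F: "finite F" "spanning T A d F" and B: "finite B"
  obtains G where "finite G" "card G \<le> card F * card K ^ card B" "spanning T (A \<union> B) (2*d) G"
proof -
  define P where "P y \<sigma> z \<longleftrightarrow> (\<forall>j\<in>A. dist ((T^^j) z) ((T^^j) y) \<le> d)
      \<and> (\<forall>i\<in>B. dist ((T^^i) z) (\<sigma> i) < d/2)" for y \<sigma> z
  define G where "G = (\<lambda>(y,\<sigma>). SOME z. P y \<sigma> z) ` (F \<times> PiE B (\<lambda>_. K))"
  have fin: "finite (F \<times> PiE B (\<lambda>_. K))" using K F B by (simp add: finite_PiE)
  have "card G \<le> card (F \<times> PiE B (\<lambda>_. K))" unfolding G_def using fin by (rule card_image_le)
  also have "\<dots> = card F * card K ^ card B" using K F B by (simp add: card_cartesian_product card_PiE)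
  finally have card_G: "card G \<le> card F * card K ^ card B" .
  have "\<exists>z\<in>G. \<forall>j\<in>A \<union> B. dist ((T^^j) x) ((T^^j) z) \<le> 2*d" for x
  proof -
    obtain y where y: "y \<in> F" "\<forall>j\<in>A. dist ((T^^j) x) ((T^^j) y) \<le> d"
      using F(2) unfolding spanning_def by blast
    obtain \<sigma> where \<sigma>: "\<sigma> \<in> PiE B (\<lambda>_. K)" "\<forall>i\<in>B. dist ((T^^i) x) (\<sigma> i) < d/2"
    proof -
      have "\<forall>i. \<exists>k. k \<in> K \<and> dist ((T^^i) x) k < d/2" using K(2) by blast
      then obtain \<kappa> where "\<forall>i. \<kappa> i \<in> K \<and> dist ((T^^i) x) (\<kappa> i) < d/2" by metis
      then show ?thesis by (intro that[of "restrict \<kappa> B"]) auto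
    qed
    define z where "z = (SOME z. P y \<sigma> z)"
    have "P y \<sigma> x" unfolding P_def using y(2) \<sigma>(2) by (simp add: dist_commute)
    then have z: "P y \<sigma> z" unfolding z_def by (rule someI)
    have "z \<in> G" unfolding G_def z_def using y(1) \<sigma>(1) by force
    moreover have "dist ((T^^j) x) ((T^^j) z) \<le> 2*d" if "j \<in> A \<union> B" for j
      using that
    proof
      assume "j \<in> A"
      then show ?thesis using y(2) z dist_triangle2[of "(T^^j) x" "(T^^j) z" "(T^^j) y"]
        unfolding P_def by fastforce
    next
      assume "j \<in> B"
      then have "dist ((T^^j) x) (\<sigma> j) < d/2" "dist ((T^^j) z) (\<sigma> j) < d/2"
        using \<sigma>(2) z unfolding P_def by auto
      then show ?thesis using dist_triangle2[of "(T^^j) x" "(T^^j) z" "\<sigma> j"]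
          zero_le_dist[of "(T^^j) x" "\<sigma> j"] by linarith
    qed
    ultimately show ?thesis by blast
  qed
  moreover have "finite G" unfolding G_def using fin by simp
  ultimately show ?thesis using that card_G unfolding spanning_def by blast
qed

lemma separated_insert:
  assumes "separated T S e E" "\<forall>y\<in>E. \<exists>i\<in>S. dist ((T^^i) x) ((T^^i) y) > e"
  shows "separated T S e (insert x E)"
  using assms dist_commute unfolding separated_def by (metis insertE)

definition dilation :: "nat \<Rightarrow> nat \<Rightarrow> nat set \<Rightarrow> nat set" where
  "dilation m n S = {j. j < n \<and> (\<exists>i\<in>S. i \<le> j \<and> j \<le> i + m)}"

lemma spanning_dilation:
  assumes "spanning T S e F"
    and "\<And>u v k. dist u v \<le> e \<Longrightarrow> k \<le> m \<Longrightarrow> dist ((T^^k) u) ((T^^k) v) \<le> d"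
  shows "spanning T (dilation m n S) d F"
  unfolding spanning_def
proof
  fix x
  obtain y where y: "y \<in> F" "\<forall>i\<in>S. dist ((T^^i) x) ((T^^i) y) \<le> e"
    using assms(1) unfolding spanning_def by blast
  have "dist ((T^^j) x) ((T^^j) y) \<le> d" if j: "j \<in> dilation m n S" for j
  proof -
    obtain i where i: "i \<in> S" "i \<le> j" "j \<le> i + m"
      using j unfolding dilation_def by blast
    then have "dist ((T^^(j - i)) ((T^^i) x)) ((T^^(j - i)) ((T^^i) y)) \<le> d"
      using assms(2) y(2) by simp
    moreover have "j = (j - i) + i" using i(2) by simp
    ultimately show ?thesis by (metis funpow_add comp_apply)
  qed
  with y(1) show "\<exists>y\<in>F. \<forall>j\<in>dilation m n S. dist ((T^^j) x) ((T^^j) y) \<le> d" by blast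
qed

lemma card_subsets_avoiding_dilation:
  assumes "m \<le> j" "j < n"
  shows "card {S \<in> Pow {..<n}. j \<notin> dilation m n S} = 2 ^ (n - Suc m)"
proof -
  have "{S \<in> Pow {..<n}. j \<notin> dilation m n S} = Pow ({..<n} - {j - m..j})"
    using assms unfolding dilation_def by auto
  moreover have "card ({..<n} - {j - m..j}) = n - Suc m"
    using assms by (subst card_Diff_subset) auto
  ultimately show ?thesis by (simp add: card_Pow)
qed

text \<open>Double counting: a time j \<ge> m is missed by the dilation of exactly a 2^-(m+1) fraction
  of all S, a time j < m possibly by all of them.\<close>
lemma sum_card_undilated_le:
  "(\<Sum>S\<in>Pow {..<n}. real (card ({..<n} - dilation m n S)))
     \<le> real m * 2^n + real n * 2^n / 2 ^ Suc m"
proof -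
  have "(\<Sum>S\<in>Pow {..<n}. real (card ({..<n} - dilation m n S)))
      = (\<Sum>S\<in>Pow {..<n}. \<Sum>j<n. of_bool (j \<notin> dilation m n S))"
    by (intro sum.cong refl) (simp add: Diff_eq Int_def)
  also have "\<dots> = (\<Sum>j<n. real (card {S \<in> Pow {..<n}. j \<notin> dilation m n S}))"
    by (subst sum.swap) (simp add: Int_def conj_commute)
  also have "\<dots> \<le> (\<Sum>j<n. of_bool (j < m) * 2^n + 2^n / 2 ^ Suc m)"
  proof (rule sum_mono)
    fix j assume "j \<in> {..<n}"
    show "real (card {S \<in> Pow {..<n}. j \<notin> dilation m n S}) \<le> of_bool (j < m) * 2^n + 2^n / 2 ^ Suc m"
    proof (cases "j < m")
      case True
      have "card {S \<in> Pow {..<n}. j \<notin> dilation m n S} \<le> card (Pow {..<n})"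
        by (rule card_mono) auto
      then have "real (card {S \<in> Pow {..<n}. j \<notin> dilation m n S}) \<le> 2^n"
        by (simp add: card_Pow of_nat_le_iff[symmetric])
      then show ?thesis using True by (simp add: add_increasing2)
    next
      case False
      with \<open>j \<in> {..<n}\<close> have "card {S \<in> Pow {..<n}. j \<notin> dilation m n S} = 2 ^ (n - Suc m)"
        by (intro card_subsets_avoiding_dilation) auto
      then have "real (card {S \<in> Pow {..<n}. j \<notin> dilation m n S}) = 2 ^ (n - Suc m)"
        by simp
      also have "\<dots> = 2^n / 2 ^ Suc m"
        using False \<open>j \<in> {..<n}\<close> by (simp add: power_diff)
      finally show ?thesis using False by simp
    qed
  qed
  also have "\<dots> = real (card ({..<n} \<inter> {..<m})) * 2^n + real n * 2^n / 2 ^ Suc m"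
    by (simp add: sum.distrib flip: sum_distrib_right) (simp add: Int_def)
  also have "\<dots> \<le> real m * 2^n + real n * 2^n / 2 ^ Suc m"
    using card_mono[of "{..<m}" "{..<n} \<inter> {..<m}"] by simp
  finally show ?thesis .
qed

abbreviation uniform_coeffs :: "nat \<Rightarrow> nat set \<Rightarrow> real" where
  "uniform_coeffs \<equiv> \<lambda>n S. 1 / 2 ^ n"

definition htop_at :: "('a::metric_space \<Rightarrow> 'a) \<Rightarrow> real \<Rightarrow> ereal" where
  "htop_at T \<epsilon> = limsup (\<lambda>n. ereal (ln (real (rspan T {..<n} \<epsilon>)) / real n))"

lemma htop_eq_SUP_htop_at: "htop T = (SUP \<epsilon>\<in>{0<..}. htop_at T \<epsilon>)"
  unfolding htop_def htop_at_def ..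

lemma limsup_weighted_mean_mono:
  fixes c f g :: "nat \<Rightarrow> nat set \<Rightarrow> real"
  assumes "\<And>n S. S \<subseteq> {..<n} \<Longrightarrow> 0 \<le> c n S" "\<And>n S. S \<subseteq> {..<n} \<Longrightarrow> f n S \<le> g n S"
  shows "limsup (\<lambda>n. ereal (1 / real n * (\<Sum>S\<in>Pow {..<n}. c n S * f n S)))
       \<le> limsup (\<lambda>n. ereal (1 / real n * (\<Sum>S\<in>Pow {..<n}. c n S * g n S)))"
proof (intro Limsup_mono always_eventually allI)
  fix n
  have "(\<Sum>S\<in>Pow {..<n}. c n S * f n S) \<le> (\<Sum>S\<in>Pow {..<n}. c n S * g n S)"
    using assms by (intro sum_mono mult_left_mono) auto
  then show "ereal (1 / real n * (\<Sum>S\<in>Pow {..<n}. c n S * f n S))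
           \<le> ereal (1 / real n * (\<Sum>S\<in>Pow {..<n}. c n S * g n S))"
    by (simp add: divide_right_mono)
qed

context
  fixes T :: "'a::metric_space \<Rightarrow> 'a"
  assumes compact_space: "compact (UNIV :: 'a set)"
begin

lemma finite_net:
  assumes "d > 0"
  obtains K :: "'a set" where "finite K" "\<forall>x. \<exists>k\<in>K. dist x k < d"
proof -
  obtain K :: "'a set" where K: "finite K" "UNIV \<subseteq> (\<Union>k\<in>K. ball k d)"
    using compact_space assms unfolding compact_eq_totally_bounded by blast
  have "\<exists>k\<in>K. dist x k < d" for x
  proof -
    obtain k where "k \<in> K" "x \<in> ball k d" using K(2) by blast
    then show ?thesis by (auto simp: dist_commute)
  qed
  with K(1) show ?thesis using that by blast
qed

lemma spanning_exists:
  assumes "finite S" "e > 0"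
  obtains F where "finite F" "spanning T S e F"
proof -
  have "(e/2)/2 > 0" using assms(2) by simp
  then obtain K :: "'a set" where K: "finite K" "\<forall>x. \<exists>k\<in>K. dist x k < (e/2)/2"
    by (rule finite_net)
  have F: "finite {undefined :: 'a}" "spanning T {} (e/2) {undefined}"
    unfolding spanning_def by simp_all
  obtain G where "finite G" "card G \<le> card {undefined :: 'a} * card K ^ card S"
    "spanning T ({} \<union> S) (2*(e/2)) G"
    by (rule spanning_extend[OF K F assms(1)])
  then show ?thesis using that by simp
qed

lemma rspan_attained:
  assumes "finite S" "e > 0"
  obtains F where "finite F" "spanning T S e F" "card F = rspan T S e"
proof -
  obtain F where "finite F" "spanning T S e F" using spanning_exists[OF assms] .
  then have "rspan T S e \<in> {card F | F. finite F \<and> spanning T S e F}"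
    unfolding rspan_def by (intro Inf_nat_def1) blast
  then show ?thesis using that by auto
qed

lemma rspan_pos:
  assumes "finite S" "e > 0"
  shows "0 < rspan T S e"
proof -
  obtain F where "finite F" "spanning T S e F" "card F = rspan T S e"
    using rspan_attained assms .
  moreover from \<open>spanning T S e F\<close> have "F \<noteq> {}" unfolding spanning_def by blast
  ultimately show ?thesis by auto
qed

lemma rspan_mono:
  assumes "finite S'" "S \<subseteq> S'" "0 < e" "e \<le> e'"
  shows "rspan T S e' \<le> rspan T S' e"
proof -
  obtain F where "finite F" "spanning T S' e F" "card F = rspan T S' e"
    using rspan_attained assms(1,3) .
  moreover from this(2) assms(2,4) have "spanning T S e' F" by (rule spanning_mono)
  ultimately show ?thesis using rspan_le_card by fastforce
qed

lemma card_separated_le_rspan: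
  assumes "finite S" "e > 0" "separated T S e E"
  shows "card E \<le> rspan T S (e/2)"
proof -
  obtain F where F: "finite F" "spanning T S (e/2) F" "card F = rspan T S (e/2)"
    using rspan_attained[of S "e/2"] assms by auto
  have "\<forall>x. \<exists>y. y \<in> F \<and> (\<forall>i\<in>S. dist ((T^^i) x) ((T^^i) y) \<le> e/2)"
    using F(2) unfolding spanning_def by blast
  then obtain f where f: "\<forall>x. f x \<in> F \<and> (\<forall>i\<in>S. dist ((T^^i) x) ((T^^i) (f x)) \<le> e/2)"
    by metis
  have "inj_on f E"
  proof (rule inj_onI, rule ccontr)
    fix x y assume xy: "x \<in> E" "y \<in> E" "f x = f y" "x \<noteq> y"
    then obtain i where i: "i \<in> S" "dist ((T^^i) x) ((T^^i) y) > e"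
      using assms(3) unfolding separated_def by blast
    have "dist ((T^^i) x) ((T^^i) (f x)) \<le> e/2" "dist ((T^^i) y) ((T^^i) (f y)) \<le> e/2"
      using f i(1) by blast+
    then show False
      using i(2) dist_triangle2[of "(T^^i) x" "(T^^i) y" "(T^^i) (f x)"] unfolding xy(3) by linarith
  qed
  then have "card E \<le> card F" using f F(1) by (meson card_inj_on_le image_subsetI)
  then show ?thesis using F(3) by simp
qed

lemma ssep_le_rspan_half:
  assumes "finite S" "e > 0"
  shows "ssep T S e \<le> rspan T S (e/2)"
  unfolding ssep_def
proof (rule cSup_least)
  show "{card E |E. finite E \<and> separated T S e E} \<noteq> {}"
    by (auto simp: separated_def)
qed (use card_separated_le_rspan assms in blast)

text \<open>A separated set of maximal cardinality is spanning: an uncovered point could be added.\<close>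
lemma rspan_le_ssep:
  assumes "finite S" "e > 0"
  shows "rspan T S e \<le> ssep T S e"
proof -
  define X where "X = {card E |E. finite E \<and> separated T S e E}"
  have "X \<noteq> {}" unfolding X_def by (auto simp: separated_def)
  moreover have "finite X"
    by (rule finite_subset[of _ "{..rspan T S (e/2)}"])
      (use card_separated_le_rspan assms in \<open>auto simp: X_def\<close>)
  ultimately have "ssep T S e \<in> X" "\<forall>x\<in>X. x \<le> ssep T S e"
    unfolding ssep_def X_def[symmetric] by (simp_all add: cSup_eq_Max)
  then obtain E where E: "finite E" "separated T S e E" "card E = ssep T S e"
    unfolding X_def by auto
  have "spanning T S e E"
    unfolding spanning_def
  proof (rule ccontr)
    assume "\<not> (\<forall>x. \<exists>y\<in>E. \<forall>i\<in>S. dist ((T ^^ i) x) ((T ^^ i) y) \<le> e)"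
    then obtain x where x: "\<forall>y\<in>E. \<exists>i\<in>S. dist ((T^^i) x) ((T^^i) y) > e"
      by (auto simp: not_le)
    then have "x \<notin> E" using assms(2) by fastforce
    have "card (insert x E) \<in> X"
      unfolding X_def using E(1) separated_insert[OF E(2) x] by blast
    then have "card (insert x E) \<le> card E" using \<open>\<forall>x\<in>X. x \<le> ssep T S e\<close> E(3) by simp
    then show False using \<open>x \<notin> E\<close> E(1) by simp
  qed
  then show ?thesis using rspan_le_card E(1,3) by fastforce
qed

lemma uniformly_continuous_iterates:
  assumes "continuous_on UNIV T" "d > 0"
  obtains e where "e > 0"
    "\<And>u v k. dist u v \<le> e \<Longrightarrow> k \<le> m \<Longrightarrow> dist ((T^^k) u) ((T^^k) v) \<le> d"
proof -
  have "continuous_on UNIV (T^^k)" for k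
    by (induction k) (auto intro: continuous_on_compose2[OF assms(1)])
  then have "uniformly_continuous_on UNIV (T^^k)" for k
    using compact_space by (rule compact_uniformly_continuous)
  have "\<forall>\<^sub>F e in at_right 0. \<forall>u v. dist u v \<le> e \<longrightarrow> dist ((T^^k) u) ((T^^k) v) \<le> d" for k
  proof -
    have "\<exists>\<delta>>0. \<forall>x\<in>UNIV. \<forall>x'\<in>UNIV. dist x' x < \<delta> \<longrightarrow> dist ((T^^k) x') ((T^^k) x) < d"
      using \<open>uniformly_continuous_on UNIV (T^^k)\<close> assms(2)
      unfolding uniformly_continuous_on_def by blast
    then obtain \<delta> where \<delta>: "\<delta> > 0" "\<And>u v. dist u v < \<delta> \<Longrightarrow> dist ((T^^k) u) ((T^^k) v) < d"
      by auto
    show ?thesis unfolding eventually_at_right_field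
    proof (intro exI conjI allI impI)
      fix e :: real and u v :: 'a assume "e < \<delta>" "dist u v \<le> e"
      then show "dist ((T^^k) u) ((T^^k) v) \<le> d" using \<delta>(2)[of u v] by simp
    qed (rule \<delta>(1))
  qed
  then have "\<forall>\<^sub>F e in at_right 0. \<forall>k\<in>{..m}. \<forall>u v. dist u v \<le> e \<longrightarrow> dist ((T^^k) u) ((T^^k) v) \<le> d"
    by (intro eventually_ball_finite) auto
  then obtain b :: real where b: "b > 0"
    "\<forall>e>0. e < b \<longrightarrow> (\<forall>k\<in>{..m}. \<forall>u v. dist u v \<le> e \<longrightarrow> dist ((T^^k) u) ((T^^k) v) \<le> d)"
    unfolding eventually_at_right_field by auto
  show ?thesis
  proof (rule that)
    show "b/2 > 0" using b(1) by simp
    fix u v :: 'a and k assume "dist u v \<le> b/2" "k \<le> m"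
    then show "dist ((T^^k) u) ((T^^k) v) \<le> d" using b(2)[rule_format, of "b/2"] b(1) by auto
  qed
qed

lemma rspan_le_rspan_mult_card_net:
  fixes K :: "'a set"
  assumes "S \<subseteq> {..<n}" "e > 0"
    and "\<And>u v k. dist u v \<le> e \<Longrightarrow> k \<le> m \<Longrightarrow> dist ((T^^k) u) ((T^^k) v) \<le> d"
    and K: "finite K" "\<forall>x. \<exists>k\<in>K. dist x k < d/2"
  shows "rspan T {..<n} (2*d) \<le> rspan T S e * card K ^ card ({..<n} - dilation m n S)"
proof -
  have "finite S" using assms(1) finite_subset by blast
  then obtain F where F: "finite F" "spanning T S e F" "card F = rspan T S e"
    using assms(2) by (rule rspan_attained)
  have "spanning T (dilation m n S) d F" using F(2) assms(3) by (rule spanning_dilation)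
  moreover have "finite ({..<n} - dilation m n S)" by simp
  ultimately obtain G where G: "finite G" "card G \<le> card F * card K ^ card ({..<n} - dilation m n S)"
    "spanning T (dilation m n S \<union> ({..<n} - dilation m n S)) (2*d) G"
    by (rule spanning_extend[OF K F(1)])
  have "dilation m n S \<union> ({..<n} - dilation m n S) = {..<n}"
    unfolding dilation_def by auto
  then show ?thesis using rspan_le_card[of G] G F(3) by fastforce
qed

lemma ln_rspan_mono:
  assumes "finite S'" "S \<subseteq> S'" "0 < e" "e \<le> e'"
  shows "ln (real (rspan T S e')) \<le> ln (real (rspan T S' e))"
proof -
  have "0 < rspan T S e'"
    using rspan_pos[OF finite_subset[OF assms(2,1)]] assms(3,4) by simp
  then show ?thesis using rspan_mono[OF assms] by simp
qed

lemma Asc_antimono: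
  assumes "\<And>n S. S \<subseteq> {..<n} \<Longrightarrow> 0 \<le> c n S" "0 < e" "e \<le> e'"
  shows "Asc c T e' \<le> Asc c T e"
  unfolding Asc_def using assms finite_subset
  by (intro limsup_weighted_mean_mono ln_rspan_mono) auto

lemma Asc_le_Asc':
  assumes "\<And>n S. S \<subseteq> {..<n} \<Longrightarrow> 0 \<le> c n S" "0 < e"
  shows "Asc c T e \<le> Asc' c T e"
  unfolding Asc_def Asc'_def
proof (rule limsup_weighted_mean_mono)
  fix n and S :: "nat set" assume "S \<subseteq> {..<n}"
  then have "finite S" using finite_subset by blast
  then have "0 < rspan T S e" "rspan T S e \<le> ssep T S e"
    using rspan_pos rspan_le_ssep assms(2) by blast+
  then show "ln (real (rspan T S e)) \<le> ln (real (ssep T S e))" by simp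
qed (use assms in blast)

lemma Asc'_le_Asc_half:
  assumes "\<And>n S. S \<subseteq> {..<n} \<Longrightarrow> 0 \<le> c n S" "0 < e"
  shows "Asc' c T e \<le> Asc c T (e/2)"
  unfolding Asc_def Asc'_def
proof (rule limsup_weighted_mean_mono)
  fix n and S :: "nat set" assume "S \<subseteq> {..<n}"
  then have "finite S" using finite_subset by blast
  then have "0 < ssep T S e" "ssep T S e \<le> rspan T S (e/2)"
    using rspan_pos[of S e] rspan_le_ssep[of S e] ssep_le_rspan_half assms(2) by simp_all
  then show "ln (real (ssep T S e)) \<le> ln (real (rspan T S (e/2)))" by simp
qed (use assms in blast)

lemma Asc_le_htop_at:
  assumes "\<And>n S. S \<subseteq> {..<n} \<Longrightarrow> 0 \<le> c n S" "\<And>n. (\<Sum>S\<in>Pow {..<n}. c n S) \<le> 1" "0 < e"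
  shows "Asc c T e \<le> htop_at T e"
  unfolding Asc_def htop_at_def
proof (intro Limsup_mono always_eventually allI)
  fix n
  define L where "L = ln (real (rspan T {..<n} e))"
  have "0 \<le> L" unfolding L_def using rspan_pos[of "{..<n}" e] assms(3) by (simp add: Suc_le_eq)
  have "(\<Sum>S\<in>Pow {..<n}. c n S * ln (real (rspan T S e))) \<le> (\<Sum>S\<in>Pow {..<n}. c n S * L)"
    unfolding L_def using assms(1,3) by (intro sum_mono mult_left_mono ln_rspan_mono) auto
  also have "\<dots> = (\<Sum>S\<in>Pow {..<n}. c n S) * L" by (simp add: sum_distrib_right)
  also have "\<dots> \<le> L" using mult_right_mono[OF assms(2) \<open>0 \<le> L\<close>] by simp
  finally show "ereal (1 / real n * (\<Sum>S\<in>Pow {..<n}. c n S * ln (real (rspan T S e))))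
      \<le> ereal (ln (real (rspan T {..<n} e)) / real n)"
    unfolding L_def by (simp add: divide_right_mono)
qed

lemma ln_rspan_le_mean:
  fixes K :: "'a set"
  assumes "e > 0"
    and "\<And>u v k. dist u v \<le> e \<Longrightarrow> k \<le> m \<Longrightarrow> dist ((T^^k) u) ((T^^k) v) \<le> d"
    and K: "finite K" "\<forall>x. \<exists>k\<in>K. dist x k < d/2"
  shows "ln (real (rspan T {..<n} (2*d)))
    \<le> (\<Sum>S\<in>Pow {..<n}. ln (real (rspan T S e))) / 2^n + ln (real (card K)) * (real m + real n / 2 ^ Suc m)"
proof -
  define c where "c = ln (real (card K))"
  define B where "B S = real (card ({..<n} - dilation m n S))" for S
  have "card K > 0" using K by (auto simp: card_gt_0_iff)
  then have "0 \<le> c" unfolding c_def by simp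
  have "0 < d" using K(2) zero_le_dist[of undefined] by (metis le_less_trans half_gt_zero_iff)
  have cover: "ln (real (rspan T {..<n} (2*d))) \<le> ln (real (rspan T S e)) + B S * c"
    if "S \<subseteq> {..<n}" for S
  proof -
    have "0 < rspan T S e" using that finite_subset rspan_pos[OF _ assms(1)] by blast
    have "real (rspan T {..<n} (2*d)) \<le> real (rspan T S e) * real (card K) ^ card ({..<n} - dilation m n S)"
      using rspan_le_rspan_mult_card_net[where m=m and d=d, OF that assms(1,2) K]
      by (metis of_nat_le_iff of_nat_mult of_nat_power)
    moreover have "0 < rspan T {..<n} (2*d)" using rspan_pos \<open>0 < d\<close> by simp
    ultimately have "ln (real (rspan T {..<n} (2*d)))
        \<le> ln (real (rspan T S e) * real (card K) ^ card ({..<n} - dilation m n S))"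
      by simp
    also have "\<dots> = ln (real (rspan T S e)) + B S * c"
      using \<open>0 < rspan T S e\<close> \<open>card K > 0\<close> unfolding B_def c_def by (simp add: ln_mult ln_realpow)
    finally show ?thesis .
  qed
  define \<Sigma> where "\<Sigma> = (\<Sum>S\<in>Pow {..<n}. ln (real (rspan T S e)))"
  have "ln (real (rspan T {..<n} (2*d))) = (\<Sum>S\<in>Pow {..<n}. ln (real (rspan T {..<n} (2*d)))) / 2^n"
    by (simp add: card_Pow)
  also have "\<dots> \<le> (\<Sum>S\<in>Pow {..<n}. ln (real (rspan T S e)) + B S * c) / 2^n"
    using cover by (intro divide_right_mono sum_mono) auto
  also have "\<dots> = \<Sigma> / 2^n + c * (\<Sum>S\<in>Pow {..<n}. B S) / 2^n"
    unfolding \<Sigma>_def by (simp add: sum.distrib sum_distrib_left add_divide_distrib mult.commute)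
  also have "\<dots> \<le> \<Sigma> / 2^n + c * (real m * 2^n + real n * 2^n / 2 ^ Suc m) / 2^n"
    using sum_card_undilated_le[of n m] \<open>0 \<le> c\<close> unfolding B_def
    by (intro add_left_mono divide_right_mono mult_left_mono) auto
  also have "\<dots> = \<Sigma> / 2^n + c * (real m + real n / 2 ^ Suc m)"
    by (simp add: field_simps)
  finally show ?thesis unfolding \<Sigma>_def c_def .
qed

lemma htop_at_le_Asc_add:
  assumes "continuous_on UNIV T" "d > 0" "\<epsilon> > 0"
  obtains e where "e > 0" "htop_at T d \<le> Asc uniform_coeffs T e + ereal \<epsilon>"
proof -
  have "(d/2)/2 > 0" using assms(2) by simp
  then obtain K :: "'a set" where K: "finite K" "\<forall>x. \<exists>k\<in>K. dist x k < (d/2)/2"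
    by (rule finite_net)
  define c where "c = ln (real (card K))"
  have "card K > 0" using K by (auto simp: card_gt_0_iff)
  then have "0 \<le> c" unfolding c_def by simp
  obtain m where m: "(1/2::real) ^ m < \<epsilon> / (c + 1)"
    using real_arch_pow_inv[of "\<epsilon> / (c + 1)" "1/2"] assms(3) \<open>0 \<le> c\<close> by auto
  have "c / 2^m \<le> (c + 1) * (1/2) ^ m" by (simp add: power_one_over divide_right_mono)
  also have "\<dots> < (c + 1) * (\<epsilon> / (c + 1))" using m \<open>0 \<le> c\<close> by (intro mult_strict_left_mono) auto
  finally have "c / 2^m < \<epsilon>" using \<open>0 \<le> c\<close> by simp
  have "d/2 > 0" using assms(2) by simp
  with assms(1) obtain e where e: "e > 0"
    "\<And>u v k. dist u v \<le> e \<Longrightarrow> k \<le> m \<Longrightarrow> dist ((T^^k) u) ((T^^k) v) \<le> d/2"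
    by (rule uniformly_continuous_iterates[where m=m]) blast
  define a where "a n = 1 / real n * (\<Sum>S\<in>Pow {..<n}. 1 / 2 ^ n * ln (real (rspan T S e)))" for n
  have "ln (real (rspan T {..<n} d)) / real n \<le> a n + c / 2^m" if n: "n \<ge> Suc (m * 2 ^ Suc m)" for n
  proof -
    have "0 < real n" using n by simp
    have "real (m * 2 ^ Suc m) \<le> real n" using n by linarith
    then have "real m / real n \<le> 1 / 2 ^ Suc m" using \<open>0 < real n\<close> by (simp add: field_simps)
    have "ln (real (rspan T {..<n} d))
        \<le> (\<Sum>S\<in>Pow {..<n}. ln (real (rspan T S e))) / 2^n + c * (real m + real n / 2 ^ Suc m)"
      using ln_rspan_le_mean[OF e K] unfolding c_def by simp
    then have "ln (real (rspan T {..<n} d)) / real n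
        \<le> ((\<Sum>S\<in>Pow {..<n}. ln (real (rspan T S e))) / 2^n + c * (real m + real n / 2 ^ Suc m)) / real n"
      using \<open>0 < real n\<close> by (simp add: divide_right_mono)
    also have "\<dots> = a n + c * (real m / real n) + c / 2 ^ Suc m"
      using \<open>0 < real n\<close> unfolding a_def by (simp add: sum_divide_distrib add_divide_distrib) (simp add: field_simps)
    also have "\<dots> \<le> a n + c / 2 ^ Suc m + c / 2 ^ Suc m"
      using mult_left_mono[OF \<open>real m / real n \<le> 1 / 2 ^ Suc m\<close> \<open>0 \<le> c\<close>] by simp
    also have "\<dots> = a n + c / 2 ^ m" by simp
    finally show ?thesis .
  qed
  then have "htop_at T d \<le> limsup (\<lambda>n. ereal (a n) + ereal (c / 2^m))"
    unfolding htop_at_def by (intro Limsup_mono) (auto simp: eventually_sequentially)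
  also have "\<dots> = Asc uniform_coeffs T e + ereal (c / 2^m)"
    unfolding Asc_def a_def by (subst Limsup_add_ereal_right) simp_all
  also have "\<dots> \<le> Asc uniform_coeffs T e + ereal \<epsilon>"
    using \<open>c / 2^m < \<epsilon>\<close> by (intro add_left_mono) simp
  finally show ?thesis using e(1) that by blast
qed

lemma htop_eq_SUP_Asc:
  assumes "continuous_on UNIV T"
  shows "htop T = (SUP e\<in>{0<..}. Asc uniform_coeffs T e)"
proof (rule antisym)
  show "htop T \<le> (SUP e\<in>{0<..}. Asc uniform_coeffs T e)"
    unfolding htop_eq_SUP_htop_at
  proof (rule SUP_least, rule ereal_le_epsilon2)
    fix d \<epsilon> :: real assume "d \<in> {0<..}" "0 < \<epsilon>"
    with assms obtain e where "e > 0" "htop_at T d \<le> Asc uniform_coeffs T e + ereal \<epsilon>"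
      by (auto elim: htop_at_le_Asc_add)
    then show "htop_at T d \<le> (SUP e\<in>{0<..}. Asc uniform_coeffs T e) + ereal \<epsilon>"
      by (meson SUP_upper add_right_mono greaterThan_iff order_trans)
  qed
  show "(SUP e\<in>{0<..}. Asc uniform_coeffs T e) \<le> htop T"
  proof (rule SUP_least)
    fix e :: real assume "e \<in> {0<..}"
    then have "Asc uniform_coeffs T e \<le> htop_at T e"
      by (intro Asc_le_htop_at) (simp_all add: card_Pow)
    also have "\<dots> \<le> htop T" unfolding htop_eq_SUP_htop_at using \<open>e \<in> {0<..}\<close> by (rule SUP_upper)
    finally show "Asc uniform_coeffs T e \<le> htop T" .
  qed
qed

lemma Asc'_le_htop:
  assumes "continuous_on UNIV T" "e > 0"
  shows "Asc' uniform_coeffs T e \<le> htop T"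
proof -
  have "Asc' uniform_coeffs T e \<le> Asc uniform_coeffs T (e/2)"
    by (rule Asc'_le_Asc_half) (simp_all add: assms(2))
  also have "\<dots> \<le> htop T"
    unfolding htop_eq_SUP_Asc[OF assms(1)] using assms(2) by (intro SUP_upper) simp
  finally show ?thesis .
qed

end

lemma tendsto_at_right_SUP_antimono:
  fixes f :: "real \<Rightarrow> 'b::{complete_linorder, linorder_topology}"
  assumes "\<And>e e'. 0 < e \<Longrightarrow> e \<le> e' \<Longrightarrow> f e' \<le> f e"
  shows "(f \<longlongrightarrow> (SUP e\<in>{0<..}. f e)) (at_right 0)"
proof (rule increasing_tendsto)
  show "\<forall>\<^sub>F e in at_right 0. f e \<le> (SUP e\<in>{0<..}. f e)"
    using eventually_at_right_less by (rule eventually_mono) (simp add: SUP_upper)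
  fix x assume "x < (SUP e\<in>{0<..}. f e)"
  then obtain e0 where "0 < e0" "x < f e0" by (auto simp: less_SUP_iff)
  then show "\<forall>\<^sub>F e in at_right 0. x < f e"
    unfolding eventually_at_right_field using assms less_le_trans by (metis less_imp_le)
qed

theorem corollaryA14:
  fixes T :: "'a::metric_space \<Rightarrow> 'a"
  assumes "compact (UNIV :: 'a set)"
    and "continuous_on UNIV T"
  shows "((\<lambda>\<epsilon>. Asc (\<lambda>n S. 1 / 2 ^ n) T \<epsilon>) \<longlongrightarrow> htop T) (at_right 0)
       \<and> ((\<lambda>\<epsilon>. Asc' (\<lambda>n S. 1 / 2 ^ n) T \<epsilon>) \<longlongrightarrow> htop T) (at_right 0)"
proof
  show Asc_lim: "((\<lambda>\<epsilon>. Asc uniform_coeffs T \<epsilon>) \<longlongrightarrow> htop T) (at_right 0)"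
    unfolding htop_eq_SUP_Asc[OF assms]
    by (rule tendsto_at_right_SUP_antimono) (simp add: Asc_antimono[OF assms(1)])
  have "\<forall>\<^sub>F \<epsilon> in at_right 0. Asc uniform_coeffs T \<epsilon> \<le> Asc' uniform_coeffs T \<epsilon>
      \<and> Asc' uniform_coeffs T \<epsilon> \<le> htop T"
    using eventually_at_right_less
    by (rule eventually_mono) (simp add: Asc_le_Asc'[OF assms(1)] Asc'_le_htop[OF assms])
  then show "((\<lambda>\<epsilon>. Asc' uniform_coeffs T \<epsilon>) \<longlongrightarrow> htop T) (at_right 0)"
    by (intro tendsto_sandwich[OF _ _ Asc_lim tendsto_const]) (auto elim: eventually_mono)
qed

end
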